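(* Let $A,B\in\mathbb{C}^{m\times n}$. The following are equivalent: (a) $A\ *\!\!\le B$; (b) $A\le^{\diamond}B$ and $A^*A=A^*B$; (c) $A\le^{\diamond}B$ and $A^\dagger A=A^\dagger B$; (d) $A\le^{\diamond}B$ and $A^*B$ is Hermitian.
   Context: $M^*$ is the conjugate transpose, $M^\dagger$ the Moore–Penrose inverse, $\mathcal{R}(M)$ the column space. Left star order: $A\ *\!\!\le B$ iff $A^*A=A^*B$ and $\mathcal{R}(A)\subseteq\mathcal{R}(B)$. Diamond order: $A\le^{\diamond}B$ iff $\mathcal{R}(A)\subseteq\mathcal{R}(B)$, $\mathcal{R}(A^* )\subseteq\mathcal{R}(B^* )$, and $AB^*A=AA^*A$. *)

theory Defs
  imports "HOL-Analysis.Analysis"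
begin

text \<open>Complex m x n matrices are modelled as complex^'n^'m (rows indexed by 'm).\<close>

definition ctrans :: "complex^'n^'m \<Rightarrow> complex^'m^'n" where
  "ctrans A = (\<chi> i j. cnj (A $ j $ i))"

definition colspace :: "complex^'n^'m \<Rightarrow> (complex^'m) set" where
  "colspace A = range (\<lambda>x. A *v x)"

definition is_mp_inverse :: "complex^'n^'m \<Rightarrow> complex^'m^'n \<Rightarrow> bool" where
  "is_mp_inverse A X \<longleftrightarrow>
     A ** X ** A = A \<and> X ** A ** X = X \<and>
     ctrans (A ** X) = A ** X \<and> ctrans (X ** A) = X ** A"

definition mp_inverse :: "complex^'n^'m \<Rightarrow> complex^'m^'n" where
  "mp_inverse A = (THE X. is_mp_inverse A X)"

definition left_star_le :: "complex^'n^'m \<Rightarrow> complex^'n^'m \<Rightarrow> bool" where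
  "left_star_le A B \<longleftrightarrow> ctrans A ** A = ctrans A ** B \<and> colspace A \<subseteq> colspace B"

definition diamond_le :: "complex^'n^'m \<Rightarrow> complex^'n^'m \<Rightarrow> bool" where
  "diamond_le A B \<longleftrightarrow> colspace A \<subseteq> colspace B \<and> colspace (ctrans A) \<subseteq> colspace (ctrans B)
     \<and> A ** ctrans B ** A = A ** ctrans A ** A"

end

theory Submission
  imports Defs
begin

text \<open>
  Every \<open>A\<close> has a least-squares inverse \<open>U\<close> (\<open>AUA = A\<close>, \<open>AU\<close> Hermitian), obtained
  from \<open>\<R>(A\<^sup>*) \<subseteq> \<R>(A\<^sup>*A)\<close>; combining one for \<open>A\<close> with one for \<open>A\<^sup>*\<close> yields the
  Moore--Penrose inverse \<open>X\<close>. Since \<open>X = X X\<^sup>* A\<^sup>*\<close> and \<open>A\<^sup>* = A\<^sup>* A X\<close>, left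
  multiplication by \<open>X\<close> and by \<open>A\<^sup>*\<close> identify the same matrices, which gives (a)\<open>\<Leftrightarrow>\<close>(c)
  once (a)\<open>\<Leftrightarrow>\<close>(b) is known. For the latter, \<open>A\<^sup>*A = A\<^sup>*B\<close> alone already implies the
  diamond order: \<open>A\<^sup>* = A\<^sup>*AU = B\<^sup>*AU\<close> and \<open>AB\<^sup>*A = AA\<^sup>*A\<close>. Conversely, if \<open>A\<^sup>*B\<close> is
  Hermitian the diamond condition reads \<open>AA\<^sup>*B = AA\<^sup>*A\<close>, and \<open>AA\<^sup>*\<close> cancels on the left
  down to \<open>A\<^sup>*\<close> because \<open>Z\<^sup>*Z = 0\<close> forces \<open>Z = 0\<close>.
\<close>

lemma ctrans_ctrans [simp]: "ctrans (ctrans A) = A"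
  by (simp add: ctrans_def vec_eq_iff)

lemma ctrans_matrix_mul: "ctrans (A ** B) = ctrans B ** ctrans A"
  by (simp add: ctrans_def vec_eq_iff matrix_matrix_mult_def mult.commute)

lemma matrix_mul_diff_ldistrib: "(A::'a::ring_1^'n^'m) ** (B - C) = A ** B - A ** C"
  by (simp add: matrix_matrix_mult_def vec_eq_iff algebra_simps sum_subtractf)

lemma inner_complex_eq_Re_cnj_mult: "inner (a::complex) b = Re (cnj a * b)"
  by (simp add: inner_complex_def)

lemma inner_matrix_vector_ctrans: "inner (A *v x) y = inner x (ctrans A *v y)"
proof -
  have "inner (A *v x) y = (\<Sum>i\<in>UNIV. Re (cnj (\<Sum>j\<in>UNIV. A$i$j * x$j) * y$i))"
    by (simp add: inner_vec_def matrix_vector_mult_def inner_complex_eq_Re_cnj_mult)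
  also have "\<dots> = (\<Sum>i\<in>UNIV. \<Sum>j\<in>UNIV. Re (cnj (A$i$j) * cnj (x$j) * y$i))"
    by (simp add: sum_distrib_right Re_sum)
  also have "\<dots> = (\<Sum>j\<in>UNIV. \<Sum>i\<in>UNIV. Re (cnj (A$i$j) * cnj (x$j) * y$i))"
    by (rule sum.swap)
  also have "\<dots> = inner x (ctrans A *v y)"
    by (simp add: inner_vec_def matrix_vector_mult_def inner_complex_eq_Re_cnj_mult ctrans_def
         sum_distrib_left Re_sum mult_ac)
  finally show ?thesis .
qed

lemma inner_gram: "inner x ((ctrans A ** A) *v x) = inner (A *v x) (A *v x)"
  by (simp add: inner_matrix_vector_ctrans matrix_vector_mul_assoc[symmetric])

lemma ctrans_mult_self_eq_0_iff: "ctrans A ** A = 0 \<longleftrightarrow> A = 0"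
proof
  assume "ctrans A ** A = 0"
  then have "A *v x = 0" for x
    using inner_gram[of x A] by simp
  then show "A = 0"
    by (simp add: matrix_eq)
qed simp

lemma mult_ctrans_left_cancel:
  assumes "A ** ctrans A ** M = A ** ctrans A ** N"
  shows "ctrans A ** M = ctrans A ** N"
proof -
  define Z where "Z = ctrans A ** (M - N)"
  have "ctrans Z ** Z = ctrans (M - N) ** (A ** ctrans A ** (M - N))"
    unfolding Z_def by (simp add: ctrans_matrix_mul matrix_mul_assoc)
  also have "\<dots> = 0"
    using assms by (simp add: matrix_mul_diff_ldistrib)
  finally have "Z = 0"
    by (simp only: ctrans_mult_self_eq_0_iff)
  then show ?thesis
    unfolding Z_def by (simp add: matrix_mul_diff_ldistrib)
qed

lemma subspace_colspace: "subspace (colspace M)"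
  unfolding colspace_def by (rule linear_subspace_image[OF matrix_vector_mul_linear subspace_UNIV])

lemma colspace_matrix_mul_subset: "colspace (M ** N) \<subseteq> colspace M"
  unfolding colspace_def by (auto simp: matrix_vector_mul_assoc[symmetric])

text \<open>
  Split \<open>y \<in> \<R>(A\<^sup>*)\<close> orthogonally along \<open>\<R>(A\<^sup>*A)\<close>: the orthogonal part \<open>w\<close> satisfies
  \<open>\<langle>w, A\<^sup>*Aw\<rangle> = 0\<close>, so \<open>Aw = 0\<close>, while \<open>w\<close> still lies in \<open>\<R>(A\<^sup>*) \<bottom> ker A\<close>; hence \<open>w = 0\<close>.
\<close>
lemma colspace_ctrans_subset_colspace_gram: "colspace (ctrans A) \<subseteq> colspace (ctrans A ** A)"
proof
  fix y assume "y \<in> colspace (ctrans A)"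
  then obtain z where y: "y = ctrans A *v z"
    by (auto simp: colspace_def)
  let ?S = "colspace (ctrans A ** A)"
  have span_S: "span ?S = ?S"
    using subspace_colspace span_eq_iff by blast
  obtain s w where "s \<in> span ?S" and w: "\<And>u. u \<in> span ?S \<Longrightarrow> orthogonal w u" and ysw: "y = s + w"
    using orthogonal_subspace_decomp_exists by metis
  then obtain t where s: "s = (ctrans A ** A) *v t"
    unfolding span_S by (auto simp: colspace_def)
  have "inner w ((ctrans A ** A) *v w) = 0"
    using w[of "(ctrans A ** A) *v w"] unfolding span_S by (simp add: orthogonal_def colspace_def)
  then have "A *v w = 0"
    by (simp add: inner_gram)
  moreover have "w = ctrans A *v (z - A *v t)"
    using ysw y s by (simp add: matrix_vector_mult_diff_distrib matrix_vector_mul_assoc)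
  ultimately have "inner w w = 0"
    by (metis inner_matrix_vector_ctrans ctrans_ctrans inner_zero_right)
  then have "y = (ctrans A ** A) *v t"
    using ysw s by simp
  then show "y \<in> ?S"
    unfolding colspace_def by (rule image_eqI) simp
qed

lemma colspace_subset_iff_factor:
  "colspace (N::complex^'p^'m) \<subseteq> colspace (M::complex^'n^'m) \<longleftrightarrow> (\<exists>U. N = M ** U)"
proof
  assume "colspace N \<subseteq> colspace M"
  then have "\<forall>j. \<exists>x. N *v axis j 1 = M *v x"
    by (auto simp: colspace_def)
  then obtain f where f: "\<And>j. N *v axis j 1 = M *v f j"
    by metis
  have "N = M ** (\<chi> i j. f j $ i)"
  proof (clarsimp simp: vec_eq_iff)
    fix i j
    have "N $ i $ j = (N *v axis j 1) $ i"
      by (simp add: matrix_vector_mult_def axis_def if_distrib cong: if_cong)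
    also have "\<dots> = (M *v f j) $ i"
      by (simp only: f)
    finally show "N $ i $ j = (M ** (\<chi> i j. f j $ i)) $ i $ j"
      by (simp add: matrix_vector_mult_def matrix_matrix_mult_def)
  qed
  then show "\<exists>U. N = M ** U" ..
qed (use colspace_matrix_mul_subset in blast)

lemma least_squares_inverse_exists:
  fixes A :: "complex^'n^'m"
  obtains U where "A ** U ** A = A" and "ctrans (A ** U) = A ** U"
proof -
  obtain U where U: "ctrans A = ctrans A ** A ** U"
    using colspace_ctrans_subset_colspace_gram colspace_subset_iff_factor by blast
  have "ctrans (A ** U) = ctrans U ** ctrans A"
    by (rule ctrans_matrix_mul)
  also have "\<dots> = ctrans U ** (ctrans A ** A ** U)"
    using U by (rule arg_cong)
  also have "\<dots> = ctrans (A ** U) ** (A ** U)"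
    by (simp add: ctrans_matrix_mul matrix_mul_assoc)
  finally have gram: "ctrans (A ** U) = ctrans (A ** U) ** (A ** U)" .
  have "A ** U = ctrans (ctrans (A ** U) ** (A ** U))"
    by (simp flip: gram)
  also have "\<dots> = ctrans (A ** U) ** (A ** U)"
    by (simp add: ctrans_matrix_mul)
  finally have herm: "ctrans (A ** U) = A ** U"
    using gram by metis
  have "A = ctrans (ctrans A ** A ** U)"
    using arg_cong[OF U, of ctrans] by (simp only: ctrans_ctrans)
  also have "\<dots> = ctrans (A ** U) ** A"
    by (simp add: ctrans_matrix_mul matrix_mul_assoc)
  also have "\<dots> = A ** U ** A"
    using herm by simp
  finally show ?thesis
    using that herm by metis
qed

text \<open>
  Urquhart's formula: with \<open>U\<close> a least-squares inverse of \<open>A\<close> and \<open>Y = V\<^sup>*\<close> for a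
  least-squares inverse \<open>V\<close> of \<open>A\<^sup>*\<close> (so \<open>AYA = A\<close> and \<open>YA\<close> is Hermitian),
  \<open>YAU\<close> satisfies all four Penrose equations.
\<close>
lemma is_mp_inverse_exists: "\<exists>X. is_mp_inverse (A::complex^'n^'m) X"
proof -
  obtain U where U1: "A ** U ** A = A" and U3: "ctrans (A ** U) = A ** U"
    using least_squares_inverse_exists .
  obtain V where V1: "ctrans A ** V ** ctrans A = ctrans A" and V3: "ctrans (ctrans A ** V) = ctrans A ** V"
    using least_squares_inverse_exists .
  define Y where "Y = ctrans V"
  have Y1: "A ** Y ** A = A"
    using arg_cong[OF V1, of ctrans] by (simp add: Y_def ctrans_matrix_mul matrix_mul_assoc)
  have Y4: "ctrans (Y ** A) = Y ** A"
    using V3 by (simp add: Y_def ctrans_matrix_mul)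
  have AX: "A ** (Y ** A ** U) = A ** U"
    using Y1 by (simp add: matrix_mul_assoc)
  have XA: "Y ** A ** U ** A = Y ** A"
    using U1 by (simp add: matrix_mul_assoc[symmetric])
  have "is_mp_inverse A (Y ** A ** U)"
    unfolding is_mp_inverse_def
  proof (intro conjI)
    show "A ** (Y ** A ** U) ** A = A"
      using AX U1 by simp
    have "Y ** A ** U ** A ** (Y ** A ** U) = Y ** (A ** Y ** A) ** U"
      using XA by (simp add: matrix_mul_assoc)
    then show "Y ** A ** U ** A ** (Y ** A ** U) = Y ** A ** U"
      using Y1 by simp
    show "ctrans (A ** (Y ** A ** U)) = A ** (Y ** A ** U)"
      using AX U3 by simp
    show "ctrans (Y ** A ** U ** A) = Y ** A ** U ** A"
      using XA Y4 by simp
  qed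
  then show ?thesis ..
qed

lemma is_mp_inverse_unique:
  assumes "is_mp_inverse A X" and "is_mp_inverse A Y"
  shows "X = Y"
proof -
  from assms have x1: "A ** X ** A = A" and x2: "X ** A ** X = X"
    and x3: "ctrans (A ** X) = A ** X" and x4: "ctrans (X ** A) = X ** A"
    and y1: "A ** Y ** A = A" and y2: "Y ** A ** Y = Y"
    and y3: "ctrans (A ** Y) = A ** Y" and y4: "ctrans (Y ** A) = Y ** A"
    unfolding is_mp_inverse_def by auto
  have "X = X ** ctrans (A ** X)"
    using x2 x3 by (simp add: matrix_mul_assoc)
  also have "\<dots> = X ** ctrans (A ** Y ** A ** X)"
    using y1 by simp
  also have "\<dots> = X ** ctrans (A ** X) ** ctrans (A ** Y)"
    by (simp add: ctrans_matrix_mul matrix_mul_assoc)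
  also have "\<dots> = X ** A ** Y"
    using x2 x3 y3 by (simp add: matrix_mul_assoc)
  also have "\<dots> = ctrans (X ** A) ** ctrans (Y ** A) ** Y"
    using x4 y2 y4 by (simp add: matrix_mul_assoc[symmetric])
  also have "\<dots> = ctrans (Y ** A ** X ** A) ** Y"
    by (simp add: ctrans_matrix_mul matrix_mul_assoc)
  also have "\<dots> = Y"
    using x1 y2 y4 by (simp add: matrix_mul_assoc[symmetric])
  finally show ?thesis .
qed

lemma is_mp_inverse_mp_inverse: "is_mp_inverse A (mp_inverse A)"
  unfolding mp_inverse_def
  by (rule theI') (use is_mp_inverse_exists is_mp_inverse_unique in blast)

lemma is_mp_inverse_left_cancel:
  assumes "is_mp_inverse A X"
  shows "X ** M = X ** N \<longleftrightarrow> ctrans A ** M = ctrans A ** N"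
proof -
  from assms have x1: "A ** X ** A = A" and x2: "X ** A ** X = X"
    and x3: "ctrans (A ** X) = A ** X"
    unfolding is_mp_inverse_def by auto
  have X: "X = X ** ctrans X ** ctrans A"
    using x2 x3 by (metis ctrans_matrix_mul matrix_mul_assoc)
  have A: "ctrans A = ctrans A ** A ** X"
    using x1 x3 by (metis ctrans_matrix_mul matrix_mul_assoc)
  show ?thesis
  proof
    assume "X ** M = X ** N"
    then have "ctrans A ** A ** (X ** M) = ctrans A ** A ** (X ** N)"
      by simp
    then show "ctrans A ** M = ctrans A ** N"
      using A by (metis matrix_mul_assoc)
  next
    assume "ctrans A ** M = ctrans A ** N"
    then have "X ** ctrans X ** (ctrans A ** M) = X ** ctrans X ** (ctrans A ** N)"
      by simp
    then show "X ** M = X ** N"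
      using X by (metis matrix_mul_assoc)
  qed
qed

lemma left_star_le_imp_diamond_le:
  assumes "left_star_le A B"
  shows "diamond_le A B"
proof -
  from assms have gram: "ctrans A ** A = ctrans A ** B" and col: "colspace A \<subseteq> colspace B"
    unfolding left_star_le_def by auto
  have BA: "ctrans B ** A = ctrans A ** A"
    using arg_cong[OF gram, of ctrans] by (simp add: ctrans_matrix_mul)
  obtain U where "ctrans A = ctrans A ** A ** U"
    using colspace_ctrans_subset_colspace_gram colspace_subset_iff_factor by blast
  then have "ctrans A = ctrans B ** (A ** U)"
    using BA by (simp add: matrix_mul_assoc)
  then have "colspace (ctrans A) \<subseteq> colspace (ctrans B)"
    using colspace_subset_iff_factor by blast
  moreover have "A ** ctrans B ** A = A ** ctrans A ** A"
    using BA by (simp flip: matrix_mul_assoc)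
  ultimately show ?thesis
    using col unfolding diamond_le_def by blast
qed

lemma diamond_le_hermitian_imp_gram_eq:
  assumes "diamond_le A B" and "ctrans (ctrans A ** B) = ctrans A ** B"
  shows "ctrans A ** A = ctrans A ** B"
proof -
  have "A ** ctrans A ** B = A ** (ctrans B ** A)"
    using assms(2) by (simp add: ctrans_matrix_mul matrix_mul_assoc)
  also have "\<dots> = A ** ctrans A ** A"
    using assms(1) by (simp add: diamond_le_def matrix_mul_assoc)
  finally show ?thesis
    by (rule mult_ctrans_left_cancel[THEN sym])
qed

theorem theorem4p2:
  fixes A B :: "complex^'n^'m"
  shows "(left_star_le A B \<longleftrightarrow> (diamond_le A B \<and> ctrans A ** A = ctrans A ** B))
       \<and> (left_star_le A B \<longleftrightarrow> (diamond_le A B \<and> mp_inverse A ** A = mp_inverse A ** B))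
       \<and> (left_star_le A B \<longleftrightarrow> (diamond_le A B \<and> ctrans (ctrans A ** B) = ctrans A ** B))"
proof -
  have b: "left_star_le A B \<longleftrightarrow> (diamond_le A B \<and> ctrans A ** A = ctrans A ** B)"
    using left_star_le_imp_diamond_le unfolding left_star_le_def diamond_le_def by blast
  have "ctrans A ** A = ctrans A ** B \<longleftrightarrow> mp_inverse A ** A = mp_inverse A ** B"
    using is_mp_inverse_left_cancel[OF is_mp_inverse_mp_inverse] by blast
  moreover have "ctrans A ** A = ctrans A ** B \<Longrightarrow> ctrans (ctrans A ** B) = ctrans A ** B"
    by (metis ctrans_ctrans ctrans_matrix_mul)
  ultimately show ?thesis
    using b diamond_le_hermitian_imp_gram_eq by blast
qed

end
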